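(* Let $0\le r\le n/2$, $B=B(n,r)=\{x:|x|\le r\}\subseteq\{0,1\}^n$, $A$ the adjacency matrix of the subgraph of the Hamming cube induced by $B$, and $y\in B$ with $|y|=t$. Let $W_y = S^{(B)}_y\cap\left\langle\{S^{(B)}_z\}_{z\in B,\,|z|<t}\right\rangle^\perp$. Then $\dim W_y = r-t+1$. Furthermore, $W_y$ has a basis $f_{y,t},\dots,f_{y,r}$, where $f_{y,i}$ is the unique function on $B$ vanishing outside $S(n,i)$ whose restriction to $S(n,i)$ lies in $V_{y,i}$ and satisfies $f_{y,i}(x)=1$ for all $x\in S(n,i)$ with $y\subseteq x$. In this basis the restriction $A_y$ of $A$ to $W_y$ is the tridiagonal $(r-t+1)\times(r-t+1)$ matrix with zero diagonal, superdiagonal entries $\beta_{t+1},\dots,\beta_r$ and subdiagonal entries $\gamma_t,\dots,\gamma_{r-1}$; equivalently, $A f_{y,t}=\gamma_t f_{y,t+1}$ (if $t<r$), $A f_{y,r}=\beta_r f_{y,r-1}$ (if $t<r$), and $A f_{y,i} = \beta_i f_{y,i-1}+\gamma_i f_{y,i+1}$ for $t<i<r$ (and $A f_{y,t}=0$ if $t=r$). Here $\beta_i = n-i+1$ and $\gamma_i = \frac{(i-t+1)(n-t-i)}{n-i}$.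
   Context: $\{0,1\}^n$ is the Hamming cube (vertices adjacent iff Hamming distance $1$); points are identified with subsets of $\{1,\dots,n\}$; $|x-y|$ is the Hamming distance and $|x|$ the weight. $S^{(B)}_y$ is the space of real functions $f$ on $B$ such that $f(x)$ depends only on $(|x|,|x-y|)$; orthogonality on $B$ is with respect to $\sum_{x\in B}f(x)g(x)$, and the span of an empty family is $\{0\}$. $S(n,i)=\{x:|x|=i\}$ with inner product $\sum_{x\in S(n,i)}f(x)g(x)$. For $|z|\le i$, $g_z$ on $S(n,i)$ is $1$ at $x$ if $z\subseteq x$ and $0$ otherwise; $U_j=\mathrm{span}\{g_z:|z|\le j\}$; the eigenspaces of $S(n,i)$ are $V_0=U_0$ and $V_j=U_j\cap U_{j-1}^\perp$ for $1\le j\le i$. For $t\le i\le r$, $V_{y,i}$ is the space of functions in the $t$-th eigenspace $V_t$ of $S(n,i)$ whose value at $x$ depends only on $|x-y|$. *)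

theory Defs
  imports "HOL-Analysis.Analysis" "HOL-Library.Function_Algebras"
begin

text \<open>Real-valued functions on points of the cube (points = subsets of {1..n}).
  A function "on" a finite set X of points is represented by a function of type
  nat set => real that vanishes outside X.\<close>

definition fscale :: "real \<Rightarrow> (nat set \<Rightarrow> real) \<Rightarrow> (nat set \<Rightarrow> real)" where
  "fscale c f = (\<lambda>x. c * f x)"

global_interpretation fvs: vector_space fscale
  by unfold_locales (auto simp: fscale_def algebra_simps)

definition cube :: "nat \<Rightarrow> nat set set" where
  "cube n = {x. x \<subseteq> {1..n}}"

definition hdist :: "nat set \<Rightarrow> nat set \<Rightarrow> nat" where
  "hdist x y = card ((x - y) \<union> (y - x))"

definition ball_B :: "nat \<Rightarrow> nat \<Rightarrow> nat set set" where
  "ball_B n r = {x \<in> cube n. card x \<le> r}"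

definition layer :: "nat \<Rightarrow> nat \<Rightarrow> nat set set" where
  "layer n i = {x \<in> cube n. card x = i}"

definition funs_on :: "nat set set \<Rightarrow> (nat set \<Rightarrow> real) set" where
  "funs_on X = {f. \<forall>x. x \<notin> X \<longrightarrow> f x = 0}"

definition ip :: "nat set set \<Rightarrow> (nat set \<Rightarrow> real) \<Rightarrow> (nat set \<Rightarrow> real) \<Rightarrow> real" where
  "ip X f g = (\<Sum>x\<in>X. f x * g x)"

definition orth :: "nat set set \<Rightarrow> (nat set \<Rightarrow> real) set \<Rightarrow> (nat set \<Rightarrow> real) set" where
  "orth X U = {f \<in> funs_on X. \<forall>g\<in>U. ip X f g = 0}"

definition adj :: "nat \<Rightarrow> nat \<Rightarrow> (nat set \<Rightarrow> real) \<Rightarrow> (nat set \<Rightarrow> real)" where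
  "adj n r f = (\<lambda>x. if x \<in> ball_B n r
      then (\<Sum>x'\<in>{x'\<in>ball_B n r. hdist x x' = 1}. f x') else 0)"

definition SB :: "nat \<Rightarrow> nat \<Rightarrow> nat set \<Rightarrow> (nat set \<Rightarrow> real) set" where
  "SB n r y = {f \<in> funs_on (ball_B n r). \<forall>x\<in>ball_B n r. \<forall>x'\<in>ball_B n r.
      card x = card x' \<and> hdist x y = hdist x' y \<longrightarrow> f x = f x'}"

definition W :: "nat \<Rightarrow> nat \<Rightarrow> nat set \<Rightarrow> (nat set \<Rightarrow> real) set" where
  "W n r y = SB n r y \<inter>
     orth (ball_B n r) (fvs.span (\<Union>z\<in>{z\<in>ball_B n r. card z < card y}. SB n r z))"

definition gz :: "nat \<Rightarrow> nat \<Rightarrow> nat set \<Rightarrow> (nat set \<Rightarrow> real)" where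
  "gz n i z = (\<lambda>x. if x \<in> layer n i \<and> z \<subseteq> x then 1 else 0)"

definition U :: "nat \<Rightarrow> nat \<Rightarrow> nat \<Rightarrow> (nat set \<Rightarrow> real) set" where
  "U n i j = fvs.span {gz n i z | z. z \<in> cube n \<and> card z \<le> j}"

definition V :: "nat \<Rightarrow> nat \<Rightarrow> nat \<Rightarrow> (nat set \<Rightarrow> real) set" where
  "V n i j = (if j = 0 then U n i 0 else U n i j \<inter> orth (layer n i) (U n i (j - 1)))"

definition Vy :: "nat \<Rightarrow> nat set \<Rightarrow> nat \<Rightarrow> (nat set \<Rightarrow> real) set" where
  "Vy n y i = {f \<in> V n i (card y). \<forall>x\<in>layer n i. \<forall>x'\<in>layer n i.
      hdist x y = hdist x' y \<longrightarrow> f x = f x'}"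

text \<open>The defining property of f_{y,i}: a function on B vanishing outside S(n,i),
  whose restriction to S(n,i) lies in V_{y,i}, equal to 1 on all x in S(n,i) with y
  a subset of x. (B contains S(n,i) for i <= r, so such a function is just a function
  vanishing outside S(n,i).)\<close>
definition is_fy :: "nat \<Rightarrow> nat set \<Rightarrow> nat \<Rightarrow> (nat set \<Rightarrow> real) \<Rightarrow> bool" where
  "is_fy n y i f \<longleftrightarrow> f \<in> funs_on (layer n i) \<and> f \<in> Vy n y i \<and>
      (\<forall>x\<in>layer n i. y \<subseteq> x \<longrightarrow> f x = 1)"

definition fy :: "nat \<Rightarrow> nat set \<Rightarrow> nat \<Rightarrow> (nat set \<Rightarrow> real)" where
  "fy n y i = (THE f. is_fy n y i f)"

definition beta :: "nat \<Rightarrow> nat \<Rightarrow> real" where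
  "beta n i = real n - real i + 1"

definition gamma :: "nat \<Rightarrow> nat \<Rightarrow> nat \<Rightarrow> real" where
  "gamma n t i = (real i - real t + 1) * (real n - real t - real i) / (real n - real i)"

end

theory Submission
  imports Defs
begin

text \<open>On the layer \<open>S(n,i)\<close> the function \<open>f\<^sub>y\<^sub>,\<^sub>i\<close> is explicit: its value at \<open>x\<close> is
  \<open>(-1)\<^sup>k (i-t+k)! (n-i-k)! / ((i-t)! (n-i)!)\<close> with \<open>k = |y - x|\<close>. Moving to a neighbour of \<open>x\<close>
  one layer up or down changes \<open>k\<close> by at most one, so \<open>A f\<^sub>y\<^sub>,\<^sub>i\<close> is computed by three contiguity
  identities for these coefficients. On the layer below \<open>t\<close> the upward neighbour sums vanish, and
  double counting the pairs \<open>z \<subseteq> x' \<subset> x\<close> then gives \<open>f\<^sub>y\<^sub>,\<^sub>i \<bottom> g\<^sub>z\<close> for \<open>|z| < t\<close> by induction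
  on \<open>i\<close>. A function on \<open>S(n,i)\<close> that depends only on \<open>|y - x|\<close>, is orthogonal to these \<open>g\<^sub>z\<close> and
  vanishes on the supersets of \<open>y\<close> is zero (test it against \<open>g\<^bsub>x \<inter> y\<^esub>\<close> and induct on \<open>|y - x|\<close>).
  This gives the uniqueness of \<open>f\<^sub>y\<^sub>,\<^sub>i\<close> and shows that every \<open>w \<in> W\<^sub>y\<close> restricts on \<open>S(n,i)\<close> to a
  multiple of \<open>f\<^sub>y\<^sub>,\<^sub>i\<close> (to \<open>0\<close> if \<open>i < t\<close>). Conversely, a function in \<open>S\<^bsup>(B)\<^esup>\<^sub>z\<close> restricts on a
  layer to a function of \<open>x \<inter> z\<close>, which lies in \<open>U\<^bsub>|z|\<^esub>\<close>, so \<open>f\<^sub>y\<^sub>,\<^sub>i \<in> W\<^sub>y\<close>. Having disjoint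
  supports, the \<open>f\<^sub>y\<^sub>,\<^sub>i\<close> form a basis of \<open>W\<^sub>y\<close>.\<close>

section \<open>The coefficients of the explicit functions\<close>

definition fy_coeff :: "nat \<Rightarrow> nat \<Rightarrow> nat \<Rightarrow> real" where
  "fy_coeff m N k = (-1)^k * fact (m + k) * fact (N - k) / (fact m * fact N)"

lemma fy_coeff_0 [simp]: "fy_coeff m N 0 = 1"
  by (simp add: fy_coeff_def)

lemma fy_coeff_down_base:
  assumes "Suc j \<le> N"
  shows "real (Suc j) * fy_coeff 0 N j + (real N + 1 - real (Suc j)) * fy_coeff 0 N (Suc j) = 0"
proof -
  obtain s where N: "N = Suc j + s" using assms le_Suc_ex by blast
  define x where "x = (-1)^j * fact j * fact s / (fact N :: real)"
  have "N - j = Suc s" "N - Suc j = s" using N by auto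
  then have 1: "fy_coeff 0 N j = x * (real s + 1)" and 2: "fy_coeff 0 N (Suc j) = - x * (real j + 1)"
    by (simp_all add: fy_coeff_def x_def fact_Suc del: fact_Suc_0)
  have 3: "real N + 1 - real (Suc j) = real s + 1" using N by simp
  show ?thesis unfolding 1 2 3 by (simp add: algebra_simps)
qed

lemma fy_coeff_down:
  assumes "k \<le> N"
  shows "real k * fy_coeff (Suc m) N (k - 1) + (real N + 1 - real k) * fy_coeff (Suc m) N k
         = (real N + 1) * fy_coeff m (Suc N) k"
proof (cases k)
  case 0
  then show ?thesis by (simp add: fy_coeff_def fact_Suc del: fact_Suc_0)
next
  case (Suc j)
  obtain s where N: "N = Suc j + s" using assms Suc le_Suc_ex by blast
  define x where "x = (-1)^j * fact (m + j + 1) * fact s / (fact m * fact N :: real)"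
  have e: "N - j = Suc s" "N - Suc j = s" "Suc N - Suc j = Suc s" using N by auto
  have 1: "fy_coeff (Suc m) N j = x * (real s + 1) / (real m + 1)"
    using e by (simp add: fy_coeff_def x_def fact_Suc del: fact_Suc_0; simp add: field_simps)
  have 2: "fy_coeff (Suc m) N (Suc j) = - x * ((real m + 1) + real j + 1) / (real m + 1)"
    using e by (simp add: fy_coeff_def x_def fact_Suc del: fact_Suc_0; simp add: field_simps)
  have 3: "fy_coeff m (Suc N) (Suc j) = - x * (real s + 1) / (real N + 1)"
    using e by (simp add: fy_coeff_def x_def fact_Suc del: fact_Suc_0; simp add: field_simps)
  have 4: "real N + 1 - real k = real s + 1" "real k = real j + 1" "k - 1 = j" using N Suc by simp_all
  have g: "\<And>M P (J::real) S. M \<noteq> 0 \<Longrightarrow> P \<noteq> 0 \<Longrightarrow>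
       (J + 1) * (x * (S + 1) / M) + (S + 1) * (- x * (M + J + 1) / M) = P * (- x * (S + 1) / P)"
    by (simp add: field_simps; simp add: algebra_simps)
  have "(real j + 1) * (x * (real s + 1) / (real m + 1)) + (real s + 1) * (- x * ((real m + 1) + real j + 1) / (real m + 1))
     = (real N + 1) * (- x * (real s + 1) / (real N + 1))"
    by (rule g) linarith+
  moreover have "real k * fy_coeff (Suc m) N (k - 1) = (real j + 1) * (x * (real s + 1) / (real m + 1))"
    by (simp only: 4(2,3) 1)
  moreover have "(real N + 1 - real k) * fy_coeff (Suc m) N k = (real s + 1) * (- x * ((real m + 1) + real j + 1) / (real m + 1))"
    unfolding 4(1) by (simp only: Suc 2)
  moreover have "fy_coeff m (Suc N) k = - x * (real s + 1) / (real N + 1)"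
    by (simp only: Suc 3)
  ultimately show ?thesis by simp
qed

lemma fy_coeff_up:
  assumes "k \<le> t" "t + 1 \<le> N"
  shows "(real t - real k) * fy_coeff m N (Suc k) + (real m + 1 + real k) * fy_coeff m N k
         = ((real m + 1) * (real N - real t) / real N) * fy_coeff (Suc m) (N - 1) k"
proof -
  have "Suc k \<le> N" using assms by simp
  then obtain s where N: "N = Suc k + s" using le_Suc_ex by blast
  define x where "x = (-1)^k * fact (m + k) * fact s / (fact m * fact N :: real)"
  have e: "N - k = Suc s" "N - Suc k = s" "N - 1 - k = s" "N - 1 = k + s" using N by auto
  have 1: "fy_coeff m N (Suc k) = - x * (real m + 1 + real k)"
    using e by (simp add: fy_coeff_def x_def fact_Suc del: fact_Suc_0; simp add: field_simps)
  have 2: "fy_coeff m N k = x * (real s + 1)"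
    using e by (simp add: fy_coeff_def x_def fact_Suc del: fact_Suc_0; simp add: field_simps)
  have 3: "fy_coeff (Suc m) (N - 1) k = x * (real m + 1 + real k) * real N / (real m + 1)"
    using e by (simp add: fy_coeff_def x_def fact_Suc N del: fact_Suc_0; simp add: field_simps)
  have 4: "real N = real k + real s + 1" using N by simp
  have 2: "fy_coeff m N k = x * (real N - real k)" unfolding 2 4 by simp
  have g: "\<And>M P (K::real) T. M \<noteq> 0 \<Longrightarrow> P \<noteq> 0 \<Longrightarrow>
       (T - K) * (- x * (M + K)) + (M + K) * (x * (P - K))
     = (M * (P - T) / P) * (x * (M + K) * P / M)"
    by (simp add: field_simps; simp add: algebra_simps)
  have "(real t - real k) * (- x * (real m + 1 + real k)) + (real m + 1 + real k) * (x * (real N - real k))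
     = ((real m + 1) * (real N - real t) / real N) * (x * (real m + 1 + real k) * real N / (real m + 1))"
    by (rule g) (use 4 in linarith)+
  then show ?thesis by (simp only: 1 2 3)
qed

section \<open>Points of the cube\<close>

lemma sum_apply: "(sum F A) x = (\<Sum>i\<in>A. F i x)"
  by (induct A rule: infinite_finite_induct) auto

lemma cube_eq_Pow: "cube n = Pow {1..n}"
  unfolding cube_def by auto

lemma finite_cube: "finite (cube n)"
  by (simp add: cube_eq_Pow)

lemma finite_of_cube: "x \<in> cube n \<Longrightarrow> finite x"
  unfolding cube_def using finite_subset by blast

lemma finite_layer: "finite (layer n i)"
  unfolding layer_def using finite_cube by simp

lemma finite_ball_B: "finite (ball_B n r)"
  unfolding ball_B_def using finite_cube by simp

lemma layer_subset_ball_B: "i \<le> r \<Longrightarrow> layer n i \<subseteq> ball_B n r"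
  unfolding layer_def ball_B_def by auto

lemma ball_B_subset_cube: "ball_B n r \<subseteq> cube n"
  unfolding ball_B_def by auto

lemma layerD: "x \<in> layer n i \<Longrightarrow> x \<subseteq> {1..n} \<and> finite x \<and> card x = i"
  unfolding layer_def cube_def using finite_subset by auto

lemma layerI: "x \<subseteq> {1..n} \<Longrightarrow> card x = i \<Longrightarrow> x \<in> layer n i"
  unfolding layer_def cube_def by auto

lemma ball_B_in_layer: "x \<in> ball_B n r \<Longrightarrow> x \<in> layer n (card x)"
  unfolding ball_B_def layer_def by simp

lemma layer_superset_exists:
  assumes "y \<subseteq> {1..n}" "card y \<le> i" "i \<le> n"
  obtains p where "p \<in> layer n i" "y \<subseteq> p"
proof -
  have fy: "finite y" using assms(1) finite_subset by blast
  have "card ({1..n} - y) = n - card y" using assms(1) fy by (simp add: card_Diff_subset)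
  then obtain S where S: "S \<subseteq> {1..n} - y" "card S = i - card y" "finite S"
    using obtain_subset_with_card_n[of "i - card y" "{1..n} - y"] assms(3) by (metis diff_le_mono)
  have "card (y \<union> S) = card y + card S" by (rule card_Un_disjoint) (use S fy in auto)
  then have "y \<union> S \<in> layer n i" using S assms by (intro layerI) auto
  then show ?thesis using that by blast
qed

lemma hdist_add_card:
  assumes "finite x" "finite y"
  shows "hdist x y + card y = card x + 2 * card (y - x)"
proof -
  have "hdist x y = card (x - y) + card (y - x)"
    unfolding hdist_def by (rule card_Un_disjoint) (use assms in auto)
  moreover have "card x = card (x \<inter> y) + card (x - y)" "card y = card (y \<inter> x) + card (y - x)"
    using assms by (simp_all add: card_Int_Diff)
  ultimately show ?thesis by (simp add: Int_commute)
qed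

lemma hdist_eq_iff_card_Diff_eq:
  assumes "finite x" "finite x'" "finite y" "card x = card x'"
  shows "hdist x y = hdist x' y \<longleftrightarrow> card (y - x) = card (y - x')"
  using hdist_add_card[of x y] hdist_add_card[of x' y] assms by auto

lemma card_Diff_eq_if_Int_eq: "x \<inter> y = x' \<inter> y \<Longrightarrow> card (y - x) = card (y - x')"
  by (metis Diff_Int2 Int_commute inf.idem)

lemma cube_neighbours:
  assumes x: "x \<in> cube n"
  shows "{x' \<in> cube n. hdist x x' = 1} = (\<lambda>e. insert e x) ` ({1..n} - x) \<union> (\<lambda>e. x - {e}) ` x"
proof (intro equalityI subsetI)
  fix x' assume "x' \<in> {x' \<in> cube n. hdist x x' = 1}"
  then have x': "x' \<subseteq> {1..n}" and "card ((x - x') \<union> (x' - x)) = 1"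
    unfolding hdist_def cube_def by auto
  then obtain e where eq: "(x - x') \<union> (x' - x) = {e}" by (auto simp: card_Suc_eq)
  have E: "(a \<in> x \<and> a \<notin> x' \<or> a \<in> x' \<and> a \<notin> x) \<longleftrightarrow> a = e" for a
    using eq[unfolded set_eq_iff, rule_format, of a] by simp
  show "x' \<in> (\<lambda>e. insert e x) ` ({1..n} - x) \<union> (\<lambda>e. x - {e}) ` x"
  proof (cases "e \<in> x")
    case True
    have "x' = x - {e}"
    proof (rule set_eqI)
      show "a \<in> x' \<longleftrightarrow> a \<in> x - {e}" for a using E[of a] True by auto
    qed
    then show ?thesis using True by blast
  next
    case False
    have "x' = insert e x"
    proof (rule set_eqI)
      show "a \<in> x' \<longleftrightarrow> a \<in> insert e x" for a using E[of a] False by auto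
    qed
    then show ?thesis using False x' by blast
  qed
next
  fix x' assume "x' \<in> (\<lambda>e. insert e x) ` ({1..n} - x) \<union> (\<lambda>e. x - {e}) ` x"
  then consider (up) e where "e \<in> {1..n} - x" "x' = insert e x" | (down) e where "e \<in> x" "x' = x - {e}"
    by blast
  then obtain e where "x' \<in> cube n" "(x - x') \<union> (x' - x) = {e}"
  proof cases
    case (up e)
    then show ?thesis using that[of e] x unfolding cube_def by auto
  next
    case (down e)
    then show ?thesis using that[of e] x unfolding cube_def by auto
  qed
  then show "x' \<in> {x' \<in> cube n. hdist x x' = 1}" unfolding hdist_def by simp
qed
lemma adj_eq_sum_insert_sum_remove:
  assumes f: "f \<in> funs_on (ball_B n r)" and x: "x \<in> ball_B n r"
  shows "adj n r f x = (\<Sum>e\<in>{1..n} - x. f (insert e x)) + (\<Sum>e\<in>x. f (x - {e}))"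
proof -
  have xc: "x \<in> cube n" using x ball_B_subset_cube by blast
  then have fx: "finite x" by (rule finite_of_cube)
  have "adj n r f x = (\<Sum>x'\<in>{x' \<in> cube n. hdist x x' = 1}. f x')"
    unfolding adj_def using x
    by (simp, intro sum.mono_neutral_left) (use finite_cube ball_B_subset_cube f in \<open>auto simp: funs_on_def\<close>)
  also have "\<dots> = (\<Sum>x'\<in>(\<lambda>e. insert e x) ` ({1..n} - x). f x') + (\<Sum>x'\<in>(\<lambda>e. x - {e}) ` x. f x')"
    unfolding cube_neighbours[OF xc] by (rule sum.union_disjoint) (use fx in auto)
  also have "\<dots> = (\<Sum>e\<in>{1..n} - x. f (insert e x)) + (\<Sum>e\<in>x. f (x - {e}))"
    by (subst (1 2) sum.reindex) (auto simp: inj_on_def)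
  finally show ?thesis .
qed

lemma sum_insert_eq_0:
  assumes "f \<in> funs_on (layer n i)" "finite x" "Suc (card x) \<noteq> i"
  shows "(\<Sum>e\<in>A - x. f (insert e x)) = 0"
  by (rule sum.neutral) (use assms in \<open>auto simp: funs_on_def layer_def\<close>)

lemma sum_remove_eq_0:
  assumes "f \<in> funs_on (layer n i)" "finite x" "card x \<noteq> Suc i"
  shows "(\<Sum>e\<in>x. f (x - {e})) = 0"
proof (rule sum.neutral, rule ballI)
  fix e assume "e \<in> x"
  then have "card (x - {e}) = card x - 1" "card x > 0"
    using assms(2) by (auto simp: card_gt_0_iff)
  then have "card (x - {e}) \<noteq> i" using assms(3) by linarith
  then show "f (x - {e}) = 0" using assms(1) unfolding funs_on_def layer_def by auto
qed

lemma sum_supersets_double_count: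
  assumes "card z \<le> j" "finite z"
  shows "real (Suc j - card z) * (\<Sum>x\<in>{x\<in>layer n (Suc j). z \<subseteq> x}. h x)
       = (\<Sum>x'\<in>{x'\<in>layer n j. z \<subseteq> x'}. \<Sum>e\<in>{1..n} - x'. h (insert e x'))"
proof -
  define L1 where "L1 = {x\<in>layer n (Suc j). z \<subseteq> x}"
  define L0 where "L0 = {x'\<in>layer n j. z \<subseteq> x'}"
  have fin: "finite L1" "finite L0" unfolding L1_def L0_def using finite_layer by auto
  have "real (Suc j - card z) * (\<Sum>x\<in>L1. h x) = (\<Sum>x\<in>L1. \<Sum>e\<in>x - z. h x)"
    unfolding sum_distrib_left
    by (intro sum.cong) (use assms layerD in \<open>auto simp: L1_def card_Diff_subset\<close>)
  also have "\<dots> = (\<Sum>(x, e)\<in>(SIGMA x:L1. x - z). h x)"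
    by (rule sum.Sigma) (use fin layerD in \<open>auto simp: L1_def\<close>)
  also have "\<dots> = (\<Sum>(x', e)\<in>(SIGMA x':L0. {1..n} - x'). h (insert e x'))"
  proof (rule sum.reindex_bij_witness[where i="\<lambda>(x, e). (insert e x, e)" and j="\<lambda>(x, e). (x - {e}, e)"])
    fix a assume "a \<in> (SIGMA x:L1. x - z)"
    then obtain x e where a: "a = (x, e)" "x \<in> L1" "e \<in> x - z" by auto
    then have "x \<subseteq> {1..n}" "finite x" "card x = Suc j" using layerD unfolding L1_def by auto
    then have "x - {e} \<in> layer n j" using a(3) by (intro layerI) (auto simp: card_Diff_singleton)
    then show "(\<lambda>(x, e). (x - {e}, e)) a \<in> (SIGMA x':L0. {1..n} - x')"
      using a \<open>x \<subseteq> {1..n}\<close> unfolding L0_def L1_def by auto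
  next
    fix b assume "b \<in> (SIGMA x':L0. {1..n} - x')"
    then obtain x e where b: "b = (x, e)" "x \<in> L0" "e \<in> {1..n} - x" by auto
    then have "x \<subseteq> {1..n}" "finite x" "card x = j" using layerD unfolding L0_def by auto
    then have "insert e x \<in> layer n (Suc j)" using b(3) by (intro layerI) auto
    then show "(\<lambda>(x, e). (insert e x, e)) b \<in> (SIGMA x:L1. x - z)"
      using b unfolding L0_def L1_def by auto
  qed (auto simp: insert_absorb)
  also have "\<dots> = (\<Sum>x'\<in>L0. \<Sum>e\<in>{1..n} - x'. h (insert e x'))"
    by (rule sum.Sigma[symmetric]) (use fin in auto)
  finally show ?thesis unfolding L0_def L1_def .
qed

section \<open>The spaces \<open>U\<^sub>j\<close> and \<open>V\<^sub>j\<close> of a layer\<close>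

definition trace_indicator :: "nat \<Rightarrow> nat \<Rightarrow> nat set \<Rightarrow> nat set \<Rightarrow> nat set \<Rightarrow> real" where
  "trace_indicator n i z u = (\<lambda>x. if x \<in> layer n i \<and> x \<inter> z = u then 1 else 0)"

lemma trace_indicator_in_U:
  assumes z: "z \<in> cube n" and u: "u \<subseteq> z"
  shows "trace_indicator n i z u \<in> U n i (card z)"
  using u
proof (induction "card (z - u)" arbitrary: u rule: less_induct)
  case less
  have fz: "finite z" using z by (rule finite_of_cube)
  define S where "S = {u'. u \<subset> u' \<and> u' \<subseteq> z}"
  have fS: "finite S" unfolding S_def by (rule finite_subset[of _ "Pow z"]) (use fz in auto)
  \<comment> \<open>\<open>g\<^sub>u\<close> is the sum of the trace indicators of all \<open>u'\<close> with \<open>u \<subseteq> u' \<subseteq> z\<close>.\<close>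
  have eq: "trace_indicator n i z u = gz n i u - (\<Sum>u'\<in>S. trace_indicator n i z u')"
  proof
    fix x
    have "(\<Sum>u'\<in>S. trace_indicator n i z u') x = (if x \<in> layer n i \<and> x \<inter> z \<in> S then 1 else 0)"
      unfolding sum_apply trace_indicator_def by (cases "x \<in> layer n i") (simp_all add: fS)
    then show "trace_indicator n i z u x = (gz n i u - (\<Sum>u'\<in>S. trace_indicator n i z u')) x"
      using less.prems unfolding trace_indicator_def gz_def S_def by auto
  qed
  have "u \<in> cube n" "card u \<le> card z"
    using less.prems z fz by (auto simp: cube_def card_mono)
  then have "gz n i u \<in> U n i (card z)"
    unfolding U_def by (intro fvs.span_base) blast
  moreover have "(\<Sum>u'\<in>S. trace_indicator n i z u') \<in> U n i (card z)"
    unfolding U_def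
  proof (intro fvs.span_sum)
    fix u' assume "u' \<in> S"
    then have "z - u' \<subset> z - u" "u' \<subseteq> z" unfolding S_def by blast+
    then have "card (z - u') < card (z - u)" "u' \<subseteq> z" using fz by (auto intro: psubset_card_mono)
    then show "trace_indicator n i z u' \<in> fvs.span {gz n i z' |z'. z' \<in> cube n \<and> card z' \<le> card z}"
      using less.hyps unfolding U_def by blast
  qed
  ultimately show ?case unfolding eq U_def by (rule fvs.span_diff)
qed

lemma trace_invariant_in_U:
  assumes z: "z \<in> cube n" and h: "h \<in> funs_on (layer n i)"
    and inv: "\<forall>x\<in>layer n i. \<forall>x'\<in>layer n i. x \<inter> z = x' \<inter> z \<longrightarrow> h x = h x'"
  shows "h \<in> U n i (card z)"
proof -
  have fz: "finite z" using z by (rule finite_of_cube)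
  define c where "c u = h (SOME x. x \<in> layer n i \<and> x \<inter> z = u)" for u
  have eq: "h = (\<Sum>u\<in>Pow z. fscale (c u) (trace_indicator n i z u))"
  proof
    fix x
    show "h x = (\<Sum>u\<in>Pow z. fscale (c u) (trace_indicator n i z u)) x"
    proof (cases "x \<in> layer n i")
      case True
      have "(\<Sum>u\<in>Pow z. fscale (c u) (trace_indicator n i z u)) x
          = (\<Sum>u\<in>Pow z. if x \<inter> z = u then c u else 0)"
        unfolding sum_apply fscale_def trace_indicator_def using True by (intro sum.cong) auto
      also have "\<dots> = c (x \<inter> z)" using fz by simp
      also have "\<dots> = h x"
        unfolding c_def using someI_ex[of "\<lambda>x'. x' \<in> layer n i \<and> x' \<inter> z = x \<inter> z"] inv True by blast
      finally show ?thesis by simp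
    next
      case False
      then show ?thesis
        using h unfolding funs_on_def sum_apply fscale_def trace_indicator_def by simp
    qed
  qed
  show ?thesis unfolding eq U_def
    by (intro fvs.span_sum fvs.span_scale trace_indicator_in_U[OF z, unfolded U_def]) auto
qed

lemma ip_gz: "ip (layer n i) h (gz n i z) = (\<Sum>x\<in>{x\<in>layer n i. z \<subseteq> x}. h x)"
  unfolding ip_def gz_def by (simp add: sum.inter_filter[OF finite_layer] if_distrib cong: if_cong)

lemma ip_commute: "ip X f g = ip X g f"
  unfolding ip_def by (simp add: mult.commute)

lemma subspace_ip_eq_0: "fvs.subspace {g. ip X f g = 0}"
  unfolding fvs.subspace_def ip_def fscale_def
  by (auto simp: sum.distrib distrib_left sum_distrib_left[symmetric] mult.left_commute)

lemma sum_supersets_eq_0_if_in_V: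
  assumes "g \<in> V n i t" "z \<in> cube n" "card z < t"
  shows "(\<Sum>x\<in>{x\<in>layer n i. z \<subseteq> x}. g x) = 0"
proof -
  have "gz n i z \<in> U n i (t - 1)"
    unfolding U_def by (rule fvs.span_base) (use assms(2,3) in auto)
  then have "ip (layer n i) g (gz n i z) = 0" using assms(1,3) unfolding V_def orth_def by auto
  then show ?thesis by (simp add: ip_gz)
qed

lemma radial_orth_eq_0:
  assumes y: "y \<in> cube n" and h: "h \<in> funs_on (layer n i)"
    and radial: "\<forall>x\<in>layer n i. \<forall>x'\<in>layer n i. hdist x y = hdist x' y \<longrightarrow> h x = h x'"
    and orth: "\<forall>z\<in>cube n. card z < card y \<longrightarrow> (\<Sum>x\<in>{x\<in>layer n i. z \<subseteq> x}. h x) = 0"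
    and top: "\<forall>x\<in>layer n i. y \<subseteq> x \<longrightarrow> h x = 0"
  shows "h = 0"
proof -
  have fy: "finite y" using y by (rule finite_of_cube)
  have "h x = 0" if "x \<in> layer n i" for x
    using that
  proof (induction "card (y - x)" arbitrary: x rule: less_induct)
    case less
    show ?case
    proof (cases "y \<subseteq> x")
      case True
      then show ?thesis using top less.prems by blast
    next
      case False
      define T where "T = {x'\<in>layer n i. x \<inter> y \<subseteq> x'}"
      define T\<^sub>0 where "T\<^sub>0 = {x'\<in>T. x' \<inter> y = x \<inter> y}"
      have fT: "finite T" unfolding T_def using finite_layer by simp
      have same: "h x' = h x" if "x' \<in> T\<^sub>0" for x'
      proof -
        have "x' \<in> layer n i" "x' \<inter> y = x \<inter> y" using that unfolding T\<^sub>0_def T_def by auto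
        then show ?thesis
          using radial less.prems hdist_eq_iff_card_Diff_eq[of x' x y] layerD[of _ n i] fy
            card_Diff_eq_if_Int_eq by metis
      qed
      have other: "h x' = 0" if "x' \<in> T - T\<^sub>0" for x'
      proof -
        have "x' \<in> layer n i" "y - x' \<subset> y - x" using that unfolding T\<^sub>0_def T_def by auto
        then show ?thesis using less.hyps fy psubset_card_mono[of "y - x"] by blast
      qed
      have "card (x \<inter> y) < card y" using False fy by (intro psubset_card_mono) auto
      moreover have "x \<inter> y \<in> cube n" using y unfolding cube_def by auto
      ultimately have "0 = (\<Sum>x'\<in>T. h x')" using orth unfolding T_def by simp
      also have "\<dots> = (\<Sum>x'\<in>T\<^sub>0. h x')"
        by (rule sum.mono_neutral_right) (use fT other in \<open>auto simp: T\<^sub>0_def\<close>)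
      also have "\<dots> = real (card T\<^sub>0) * h x" using same by simp
      finally have "real (card T\<^sub>0) * h x = 0" by simp
      moreover have "x \<in> T\<^sub>0" using less.prems unfolding T\<^sub>0_def T_def by auto
      then have "card T\<^sub>0 \<noteq> 0" using fT unfolding T\<^sub>0_def by auto
      ultimately show ?thesis by simp
    qed
  qed
  then show ?thesis using h by (auto simp: funs_on_def fun_eq_iff)
qed

section \<open>Layer restrictions and the space \<open>W\<^sub>y\<close>\<close>

definition layer_restr :: "nat \<Rightarrow> nat \<Rightarrow> (nat set \<Rightarrow> real) \<Rightarrow> nat set \<Rightarrow> real" where
  "layer_restr n i f = (\<lambda>x. if x \<in> layer n i then f x else 0)"

lemma layer_restr_in_funs_on: "layer_restr n i f \<in> funs_on (layer n i)"
  unfolding layer_restr_def funs_on_def by simp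

lemma ip_ball_B_eq_ip_layer:
  assumes "f \<in> funs_on (layer n i)" "i \<le> r"
  shows "ip (ball_B n r) f g = ip (layer n i) f (layer_restr n i g)"
proof -
  have "ip (ball_B n r) f g = (\<Sum>x\<in>layer n i. f x * g x)"
    unfolding ip_def by (rule sum.mono_neutral_right)
      (use finite_ball_B layer_subset_ball_B assms in \<open>auto simp: funs_on_def\<close>)
  then show ?thesis unfolding ip_def layer_restr_def by simp
qed

lemma sum_layer_restr:
  assumes "f \<in> funs_on (ball_B n r)"
  shows "(\<Sum>i\<le>r. layer_restr n i f) = f"
proof
  fix x
  show "(\<Sum>i\<le>r. layer_restr n i f) x = f x"
  proof (cases "x \<in> ball_B n r")
    case True
    then have "\<And>i. x \<in> layer n i \<longleftrightarrow> i = card x" "card x \<le> r"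
      using ball_B_in_layer layerD by (fastforce simp: ball_B_def)+
    then show ?thesis unfolding sum_apply layer_restr_def by simp
  next
    case False
    then have "f x = 0" using assms unfolding funs_on_def by blast
    then show ?thesis unfolding sum_apply layer_restr_def by (simp cong: if_cong)
  qed
qed

lemma gz_in_SB:
  assumes "z \<in> cube n" "i \<le> r"
  shows "gz n i z \<in> SB n r z"
  unfolding SB_def
proof (intro CollectI conjI ballI impI)
  show "gz n i z \<in> funs_on (ball_B n r)"
    using layer_subset_ball_B[OF assms(2)] unfolding funs_on_def gz_def by auto
  fix x x' assume x: "x \<in> ball_B n r" "x' \<in> ball_B n r"
    and eq: "card x = card x' \<and> hdist x z = hdist x' z"
  have "finite x" "finite x'" "finite z"
    using x assms(1) ball_B_subset_cube finite_of_cube by blast+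
  then have "card (z - x) = card (z - x')"
    using eq hdist_eq_iff_card_Diff_eq by blast
  then have "z \<subseteq> x \<longleftrightarrow> z \<subseteq> x'"
    using \<open>finite z\<close> by (metis Diff_eq_empty_iff card_0_eq finite_Diff)
  moreover have "x \<in> layer n i \<longleftrightarrow> x' \<in> layer n i"
    using x eq ball_B_subset_cube unfolding layer_def by auto
  ultimately show "gz n i z x = gz n i z x'" unfolding gz_def by simp
qed

lemma SB_layer_restr_in_U:
  assumes "z \<in> cube n" "g \<in> SB n r z" "i \<le> r"
  shows "layer_restr n i g \<in> U n i (card z)"
proof (rule trace_invariant_in_U[OF assms(1) layer_restr_in_funs_on], intro ballI impI)
  fix x x' assume x: "x \<in> layer n i" "x' \<in> layer n i" and "x \<inter> z = x' \<inter> z"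
  then have "hdist x z = hdist x' z"
    using hdist_eq_iff_card_Diff_eq[of x x' z] card_Diff_eq_if_Int_eq layerD assms(1) finite_of_cube
    by metis
  moreover have "x \<in> ball_B n r" "x' \<in> ball_B n r" "card x = card x'"
    using x layer_subset_ball_B[OF assms(3)] layerD by auto
  ultimately have "g x = g x'" using assms(2) unfolding SB_def by blast
  then show "layer_restr n i g x = layer_restr n i g x'" using x unfolding layer_restr_def by simp
qed

lemma subspace_SB: "fvs.subspace (SB n r z)"
proof (rule fvs.subspaceI)
  show "0 \<in> SB n r z" unfolding SB_def funs_on_def by simp
next
  fix f g assume f: "f \<in> SB n r z" and g: "g \<in> SB n r z"
  show "f + g \<in> SB n r z" unfolding SB_def
  proof (intro CollectI conjI ballI impI)
    show "f + g \<in> funs_on (ball_B n r)" using f g unfolding SB_def funs_on_def by simp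
    fix x x' assume "x \<in> ball_B n r" "x' \<in> ball_B n r" "card x = card x' \<and> hdist x z = hdist x' z"
    then have "f x = f x'" "g x = g x'" using f g unfolding SB_def by blast+
    then show "(f + g) x = (f + g) x'" by simp
  qed
next
  fix c f assume f: "f \<in> SB n r z"
  show "fscale c f \<in> SB n r z" unfolding SB_def
  proof (intro CollectI conjI ballI impI)
    show "fscale c f \<in> funs_on (ball_B n r)" using f unfolding SB_def funs_on_def fscale_def by simp
    fix x x' assume "x \<in> ball_B n r" "x' \<in> ball_B n r" "card x = card x' \<and> hdist x z = hdist x' z"
    then have "f x = f x'" using f unfolding SB_def by blast
    then show "fscale c f x = fscale c f x'" unfolding fscale_def by simp
  qed
qed

lemma subspace_orth: "fvs.subspace (orth X G)"
  unfolding fvs.subspace_def orth_def funs_on_def ip_def fscale_def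
  by (auto simp: sum.distrib distrib_right sum_distrib_left[symmetric] mult.assoc)

lemma subspace_W: "fvs.subspace (W n r y)"
  unfolding W_def by (intro fvs.subspace_inter subspace_SB subspace_orth)

lemma W_layer_restr_radial:
  assumes "w \<in> W n r y" "i \<le> r"
  shows "\<forall>x\<in>layer n i. \<forall>x'\<in>layer n i. hdist x y = hdist x' y \<longrightarrow> layer_restr n i w x = layer_restr n i w x'"
proof (intro ballI impI)
  fix x x' assume x: "x \<in> layer n i" "x' \<in> layer n i" and "hdist x y = hdist x' y"
  moreover have "x \<in> ball_B n r" "x' \<in> ball_B n r" "card x = card x'"
    using x layer_subset_ball_B[OF assms(2)] layerD by auto
  ultimately have "w x = w x'" using assms(1) unfolding W_def SB_def by blast
  then show "layer_restr n i w x = layer_restr n i w x'" using x unfolding layer_restr_def by simp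
qed

lemma W_layer_restr_orth:
  assumes "w \<in> W n r y" "i \<le> r" "y \<in> ball_B n r"
  shows "\<forall>z\<in>cube n. card z < card y \<longrightarrow> (\<Sum>x\<in>{x\<in>layer n i. z \<subseteq> x}. layer_restr n i w x) = 0"
proof (intro ballI impI)
  fix z assume z: "z \<in> cube n" "card z < card y"
  then have "z \<in> ball_B n r" using assms(3) unfolding ball_B_def by simp
  then have "gz n i z \<in> fvs.span (\<Union>z\<in>{z\<in>ball_B n r. card z < card y}. SB n r z)"
    using z gz_in_SB[OF z(1) assms(2)] by (intro fvs.span_base) blast
  then have "ip (ball_B n r) (gz n i z) w = 0"
    using assms(1) unfolding W_def orth_def by (auto simp: ip_commute)
  moreover have "gz n i z \<in> funs_on (layer n i)" unfolding funs_on_def gz_def by simp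
  ultimately have "ip (layer n i) (gz n i z) (layer_restr n i w) = 0"
    using ip_ball_B_eq_ip_layer[OF _ assms(2)] by simp
  then have "ip (layer n i) (layer_restr n i w) (gz n i z) = 0" by (metis ip_commute)
  then show "(\<Sum>x\<in>{x\<in>layer n i. z \<subseteq> x}. layer_restr n i w x) = 0" by (simp add: ip_gz)
qed

lemma W_layer_restr_below:
  assumes "w \<in> W n r y" "y \<in> ball_B n r" "i < card y"
  shows "layer_restr n i w = 0"
proof (rule radial_orth_eq_0)
  have "i \<le> r" using assms(2,3) unfolding ball_B_def by simp
  then show "\<forall>x\<in>layer n i. \<forall>x'\<in>layer n i. hdist x y = hdist x' y \<longrightarrow> layer_restr n i w x = layer_restr n i w x'"
    "\<forall>z\<in>cube n. card z < card y \<longrightarrow> (\<Sum>x\<in>{x\<in>layer n i. z \<subseteq> x}. layer_restr n i w x) = 0"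
    using W_layer_restr_radial W_layer_restr_orth assms by blast+
  show "\<forall>x\<in>layer n i. y \<subseteq> x \<longrightarrow> layer_restr n i w x = 0"
    using assms(3) layerD card_mono by (metis leD)
qed (use assms(2) ball_B_subset_cube layer_restr_in_funs_on in auto)

section \<open>The explicit functions \<open>f\<^sub>y\<^sub>,\<^sub>i\<close>\<close>

definition fy_explicit :: "nat \<Rightarrow> nat set \<Rightarrow> nat \<Rightarrow> nat set \<Rightarrow> real" where
  "fy_explicit n y i =
     (\<lambda>x. if x \<in> layer n i then fy_coeff (i - card y) (n - i) (card (y - x)) else 0)"

lemma fy_explicit_in_funs_on: "fy_explicit n y i \<in> funs_on (layer n i)"
  unfolding funs_on_def fy_explicit_def by auto

lemma fy_explicit_eq_0: "card x \<noteq> i \<Longrightarrow> fy_explicit n y i x = 0"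
  unfolding fy_explicit_def layer_def by auto

lemma fy_explicit_superset:
  assumes "x \<in> layer n i" "y \<subseteq> x"
  shows "fy_explicit n y i x = 1"
proof -
  have "card (y - x) = 0" using assms(2) by (metis Diff_eq_empty_iff card.empty)
  then show ?thesis using assms(1) by (simp add: fy_explicit_def)
qed

lemma fy_explicit_at_superset:
  assumes "p \<in> layer n i" "y \<subseteq> p"
  shows "fy_explicit n y j p = (if j = i then 1 else 0)"
  using assms fy_explicit_superset[OF assms] fy_explicit_eq_0 layerD by auto

lemma fy_explicit_radial:
  assumes "finite y" "x \<in> layer n i" "x' \<in> layer n i" "hdist x y = hdist x' y"
  shows "fy_explicit n y i x = fy_explicit n y i x'"
  using assms hdist_eq_iff_card_Diff_eq[of x x' y] layerD unfolding fy_explicit_def by auto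

lemma fy_explicit_in_U: "y \<in> cube n \<Longrightarrow> fy_explicit n y i \<in> U n i (card y)"
  by (rule trace_invariant_in_U[OF _ fy_explicit_in_funs_on])
    (auto simp: fy_explicit_def dest: card_Diff_eq_if_Int_eq)

lemma sum_insert_fy_explicit:
  assumes y: "y \<subseteq> {1..n}" and x: "x \<in> layer n j"
  shows "(\<Sum>e\<in>{1..n} - x. fy_explicit n y (Suc j) (insert e x))
    = real (card (y - x)) * fy_coeff (Suc j - card y) (n - Suc j) (card (y - x) - 1)
      + real (n - j - card (y - x)) * fy_coeff (Suc j - card y) (n - Suc j) (card (y - x))"
proof -
  have xs: "x \<subseteq> {1..n}" "finite x" "card x = j" using layerD[OF x] by auto
  have fy: "finite y" using y finite_subset by blast
  let ?c = "fy_coeff (Suc j - card y) (n - Suc j)"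
  have "(\<Sum>e\<in>{1..n} - x. fy_explicit n y (Suc j) (insert e x))
      = (\<Sum>e\<in>{1..n} - x. if e \<in> y then ?c (card (y - x) - 1) else ?c (card (y - x)))"
  proof (rule sum.cong[OF refl])
    fix e assume e: "e \<in> {1..n} - x"
    then have "insert e x \<in> layer n (Suc j)" using xs by (intro layerI) auto
    moreover have "y - insert e x = (y - x) - {e}" by blast
    ultimately show "fy_explicit n y (Suc j) (insert e x)
        = (if e \<in> y then ?c (card (y - x) - 1) else ?c (card (y - x)))"
      using e fy by (simp add: fy_explicit_def card_Diff_singleton_if)
  qed
  also have "\<dots> = real (card (y - x)) * ?c (card (y - x) - 1)
      + real (card ({1..n} - (x \<union> y))) * ?c (card (y - x))"
  proof -
    have "({1..n} - x) \<inter> {e. e \<in> y} = y - x" "({1..n} - x) \<inter> - {e. e \<in> y} = {1..n} - (x \<union> y)"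
      using y by auto
    then show ?thesis by (simp add: sum.If_cases)
  qed
  also have "card ({1..n} - (x \<union> y)) = n - j - card (y - x)"
  proof -
    have "card (x \<union> y) = j + card (y - x)"
      using card_Un_disjoint[of x "y - x"] xs fy by (simp add: Un_Diff_cancel)
    then show ?thesis using xs y by (simp add: card_Diff_subset fy)
  qed
  finally show ?thesis .
qed

lemma sum_remove_fy_explicit:
  assumes y: "y \<subseteq> {1..n}" and x: "x \<in> layer n (Suc i)"
  shows "(\<Sum>e\<in>x. fy_explicit n y i (x - {e}))
    = real (card (x \<inter> y)) * fy_coeff (i - card y) (n - i) (Suc (card (y - x)))
      + real (card (x - y)) * fy_coeff (i - card y) (n - i) (card (y - x))"
proof -
  have xs: "x \<subseteq> {1..n}" "finite x" "card x = Suc i" using layerD[OF x] by auto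
  have fy: "finite y" using y finite_subset by blast
  let ?c = "fy_coeff (i - card y) (n - i)"
  have "(\<Sum>e\<in>x. fy_explicit n y i (x - {e}))
      = (\<Sum>e\<in>x. if e \<in> y then ?c (Suc (card (y - x))) else ?c (card (y - x)))"
  proof (rule sum.cong[OF refl])
    fix e assume e: "e \<in> x"
    then have "x - {e} \<in> layer n i" using xs by (intro layerI) auto
    moreover have "y - (x - {e}) = (if e \<in> y then insert e (y - x) else y - x)" using e by auto
    ultimately show "fy_explicit n y i (x - {e})
        = (if e \<in> y then ?c (Suc (card (y - x))) else ?c (card (y - x)))"
      using e fy by (simp add: fy_explicit_def)
  qed
  also have "\<dots> = real (card (x \<inter> y)) * ?c (Suc (card (y - x))) + real (card (x - y)) * ?c (card (y - x))"
  proof -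
    have "x \<inter> {e. e \<in> y} = x \<inter> y" "x \<inter> - {e. e \<in> y} = x - y" by auto
    then show ?thesis using xs by (simp add: sum.If_cases)
  qed
  finally show ?thesis .
qed

context
  fixes n r :: nat and y :: "nat set"
  assumes two_r_le_n: "2 * r \<le> n" and y_in_ball_B: "y \<in> ball_B n r"
begin

lemma y_subset: "y \<subseteq> {1..n}"
  using y_in_ball_B unfolding ball_B_def cube_def by auto

lemma finite_y: "finite y"
  using y_subset finite_subset by blast

lemma y_in_cube: "y \<in> cube n"
  using y_in_ball_B ball_B_subset_cube by blast

lemma card_y_le_r: "card y \<le> r"
  using y_in_ball_B unfolding ball_B_def by auto

lemma card_Diff_y_le: "card (y - x) \<le> card y"
  using finite_y by (simp add: card_mono)

lemma obtain_superset_in_layer: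
  assumes "card y \<le> i" "i \<le> r"
  obtains p where "p \<in> layer n i" "y \<subseteq> p"
proof -
  have "i \<le> n" using assms(2) two_r_le_n by linarith
  then show ?thesis using layer_superset_exists[OF y_subset assms(1)] that by blast
qed

lemma sum_insert_fy_explicit_eq:
  assumes "card y \<le> Suc j" "Suc j \<le> r" and x: "x \<in> layer n j"
  shows "(\<Sum>e\<in>{1..n} - x. fy_explicit n y (Suc j) (insert e x))
    = (if card y \<le> j then beta n (Suc j) * fy_explicit n y j x else 0)"
proof -
  define k where "k = card (y - x)"
  define N where "N = n - Suc j"
  have "k \<le> r" using card_Diff_y_le[of x] card_y_le_r unfolding k_def by (rule le_trans)
  moreover have "r + Suc j \<le> n" using assms(2) two_r_le_n by linarith
  ultimately have kN: "k \<le> N" and nj: "n - j = Suc N" unfolding N_def by auto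
  then have "real (n - j - k) = real N + 1 - real k" by (simp add: of_nat_diff)
  then have sum: "(\<Sum>e\<in>{1..n} - x. fy_explicit n y (Suc j) (insert e x))
      = real k * fy_coeff (Suc j - card y) N (k - 1) + (real N + 1 - real k) * fy_coeff (Suc j - card y) N k"
    using sum_insert_fy_explicit[OF y_subset x] unfolding k_def N_def by simp
  show ?thesis
  proof (cases "card y \<le> j")
    case True
    then have "Suc j - card y = Suc (j - card y)" by simp
    moreover have "beta n (Suc j) = real N + 1" unfolding beta_def using nj by simp
    moreover have "fy_explicit n y j x = fy_coeff (j - card y) (Suc N) k"
      using nj x unfolding fy_explicit_def k_def by simp
    ultimately show ?thesis using sum fy_coeff_down[OF kN] True by simp
  next
    case False
    then have "card y = Suc j" using assms(1) by simp
    then have "\<not> y \<subseteq> x" using layerD[OF x] card_mono by (metis Suc_n_not_le_n)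
    then have "k \<noteq> 0" using finite_y unfolding k_def by simp
    then obtain k' where "k = Suc k'" by (cases k) auto
    then show ?thesis using sum fy_coeff_down_base[of k' N] kN False \<open>card y = Suc j\<close> by simp
  qed
qed

lemma sum_remove_fy_explicit_eq:
  assumes "card y \<le> i" "Suc i \<le> r" and x: "x \<in> layer n (Suc i)"
  shows "(\<Sum>e\<in>x. fy_explicit n y i (x - {e})) = gamma n (card y) i * fy_explicit n y (Suc i) x"
proof -
  define k where "k = card (y - x)"
  define N where "N = n - i"
  define m where "m = i - card y"
  have "r + Suc i \<le> n" using assms(2) two_r_le_n by linarith
  then have tN: "card y + 1 \<le> N" using card_y_le_r unfolding N_def by linarith
  have "k + card (x \<inter> y) = card y"
    using card_Int_Diff[OF finite_y, of x] unfolding k_def by (simp add: Int_commute)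
  moreover have "card (x - y) + card (x \<inter> y) = Suc i"
    using card_Int_Diff[of x y] layerD[OF x] by simp
  ultimately have "real (card (x \<inter> y)) = real (card y) - real k"
    and "real (card (x - y)) = real m + 1 + real k"
    using assms(1) unfolding m_def by linarith+
  moreover have "i - card y = m" "n - i = N" "Suc i - card y = Suc m" "n - Suc i = N - 1"
    using assms(1) unfolding m_def N_def by auto
  moreover have "gamma n (card y) i = (real m + 1) * (real N - real (card y)) / real N"
    unfolding gamma_def using assms(1) tN unfolding m_def N_def by (simp add: of_nat_diff)
  ultimately show ?thesis
    using sum_remove_fy_explicit[OF y_subset x] fy_coeff_up[OF card_Diff_y_le[of x] tN, of m] x
    unfolding k_def fy_explicit_def by simp
qed

lemma adj_fy_explicit_apply:
  assumes "card y \<le> i" "i \<le> r"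
  shows "adj n r (fy_explicit n y i) x
    = (if card y < i then beta n i * fy_explicit n y (i - 1) x else 0)
      + (if i < r then gamma n (card y) i * fy_explicit n y (i + 1) x else 0)"
proof (cases "x \<in> ball_B n r")
  case False
  have "x \<notin> layer n (i - 1)" using False layer_subset_ball_B[of "i - 1" r n] assms(2) by fastforce
  moreover have "i < r \<Longrightarrow> x \<notin> layer n (i + 1)" using False layer_subset_ball_B[of "i + 1" r n] by auto
  ultimately show ?thesis using False by (simp add: adj_def fy_explicit_def)
next
  case True
  then have x: "x \<in> layer n (card x)" "finite x" "card x \<le> r"
    using ball_B_in_layer[OF True] layerD[OF ball_B_in_layer[OF True]] unfolding ball_B_def by simp_all
  have "fy_explicit n y i \<in> funs_on (ball_B n r)"
    using fy_explicit_in_funs_on layer_subset_ball_B[OF assms(2)] unfolding funs_on_def by blast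
  note adj = adj_eq_sum_insert_sum_remove[OF this True]
  note insert_0 = sum_insert_eq_0[OF fy_explicit_in_funs_on x(2)]
  note remove_0 = sum_remove_eq_0[OF fy_explicit_in_funs_on x(2)]
  consider (up) "Suc (card x) = i" | (down) "card x = Suc i" | (far) "Suc (card x) \<noteq> i" "card x \<noteq> Suc i"
    by blast
  then show ?thesis
  proof cases
    case up
    then have "card y \<le> Suc (card x)" "Suc (card x) \<le> r" using assms by auto
    from sum_insert_fy_explicit_eq[OF this x(1)]
    have "(\<Sum>e\<in>{1..n} - x. fy_explicit n y i (insert e x))
        = (if card y < i then beta n i * fy_explicit n y (i - 1) x else 0)"
      using up by auto
    moreover have "fy_explicit n y (i + 1) x = 0" by (rule fy_explicit_eq_0) (use up in simp)
    ultimately show ?thesis using adj remove_0 up by simp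
  next
    case down
    then have "card y \<le> i" "Suc i \<le> r" "x \<in> layer n (Suc i)" using assms x by auto
    from sum_remove_fy_explicit_eq[OF this]
    have "(\<Sum>e\<in>x. fy_explicit n y i (x - {e})) = (if i < r then gamma n (card y) i * fy_explicit n y (i + 1) x else 0)"
      using down x(3) by simp
    moreover have "fy_explicit n y (i - 1) x = 0" by (rule fy_explicit_eq_0) (use down in simp)
    ultimately show ?thesis using adj insert_0 down by simp
  next
    case far
    moreover have "card y < i \<Longrightarrow> fy_explicit n y (i - 1) x = 0" "fy_explicit n y (i + 1) x = 0"
      using far by (auto intro: fy_explicit_eq_0)
    ultimately show ?thesis using adj insert_0 remove_0 by simp
  qed
qed

lemma fy_explicit_orth_gz:
  assumes "card y \<le> i" "i \<le> r" "z \<in> cube n" "card z < card y"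
  shows "(\<Sum>x\<in>{x\<in>layer n i. z \<subseteq> x}. fy_explicit n y i x) = 0"
  using assms(1,2)
proof (induction i)
  case 0
  then show ?case using assms(4) by simp
next
  case (Suc j)
  have fz: "finite z" using assms(3) by (rule finite_of_cube)
  have "real (Suc j - card z) * (\<Sum>x\<in>{x\<in>layer n (Suc j). z \<subseteq> x}. fy_explicit n y (Suc j) x)
      = (\<Sum>x'\<in>{x'\<in>layer n j. z \<subseteq> x'}. \<Sum>e\<in>{1..n} - x'. fy_explicit n y (Suc j) (insert e x'))"
    by (rule sum_supersets_double_count) (use Suc.prems assms(4) fz in auto)
  also have "\<dots> = (\<Sum>x'\<in>{x'\<in>layer n j. z \<subseteq> x'}.
      if card y \<le> j then beta n (Suc j) * fy_explicit n y j x' else 0)"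
    by (rule sum.cong[OF refl]) (use sum_insert_fy_explicit_eq Suc.prems in blast)
  also have "\<dots> = 0"
  proof (cases "card y \<le> j")
    case True
    then show ?thesis using Suc.IH Suc.prems by (simp add: sum_distrib_left[symmetric])
  qed simp
  finally show ?case using Suc.prems assms(4) by simp
qed

lemma fy_explicit_orth_U:
  assumes "card y \<le> i" "i \<le> r" "j < card y" "g \<in> U n i j"
  shows "ip (layer n i) (fy_explicit n y i) g = 0"
proof -
  have "U n i j \<subseteq> {g. ip (layer n i) (fy_explicit n y i) g = 0}"
    unfolding U_def
  proof (rule fvs.span_minimal[OF _ subspace_ip_eq_0], rule subsetI)
    fix g assume "g \<in> {gz n i z |z. z \<in> cube n \<and> card z \<le> j}"
    then obtain z where "g = gz n i z" "z \<in> cube n" "card z < card y" using assms(3) by auto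
    then show "g \<in> {g. ip (layer n i) (fy_explicit n y i) g = 0}"
      using fy_explicit_orth_gz[OF assms(1,2)] by (simp add: ip_gz)
  qed
  then show ?thesis using assms(4) by blast
qed

lemma is_fy_fy_explicit:
  assumes "card y \<le> i" "i \<le> r"
  shows "is_fy n y i (fy_explicit n y i)"
proof -
  have "fy_explicit n y i \<in> orth (layer n i) (U n i (card y - 1))" if "card y \<noteq> 0"
    using that fy_explicit_in_funs_on fy_explicit_orth_U[OF assms, of "card y - 1"]
    unfolding orth_def by auto
  then have "fy_explicit n y i \<in> V n i (card y)"
    using fy_explicit_in_U[OF y_in_cube] unfolding V_def by auto
  then show ?thesis
    unfolding is_fy_def Vy_def
    using fy_explicit_in_funs_on fy_explicit_radial[OF finite_y] fy_explicit_superset by blast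
qed

lemma is_fy_unique:
  assumes "card y \<le> i" "i \<le> r" "is_fy n y i g"
  shows "g = fy_explicit n y i"
proof -
  have g: "g \<in> funs_on (layer n i)" "g \<in> V n i (card y)"
    "\<forall>x\<in>layer n i. \<forall>x'\<in>layer n i. hdist x y = hdist x' y \<longrightarrow> g x = g x'"
    "\<forall>x\<in>layer n i. y \<subseteq> x \<longrightarrow> g x = 1"
    using assms(3) unfolding is_fy_def Vy_def by blast+
  have "g - fy_explicit n y i = 0"
  proof (rule radial_orth_eq_0[OF y_in_cube])
    show "g - fy_explicit n y i \<in> funs_on (layer n i)"
      using g(1) fy_explicit_in_funs_on unfolding funs_on_def by simp
    show "\<forall>x\<in>layer n i. \<forall>x'\<in>layer n i. hdist x y = hdist x' y \<longrightarrow>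
        (g - fy_explicit n y i) x = (g - fy_explicit n y i) x'"
    proof (intro ballI impI)
      fix x x' assume "x \<in> layer n i" "x' \<in> layer n i" "hdist x y = hdist x' y"
      then have "g x = g x'" "fy_explicit n y i x = fy_explicit n y i x'"
        using g(3) fy_explicit_radial[OF finite_y] by blast+
      then show "(g - fy_explicit n y i) x = (g - fy_explicit n y i) x'" by simp
    qed
    show "\<forall>x\<in>layer n i. y \<subseteq> x \<longrightarrow> (g - fy_explicit n y i) x = 0"
      using g(4) fy_explicit_superset by simp
    show "\<forall>z\<in>cube n. card z < card y \<longrightarrow> (\<Sum>x\<in>{x\<in>layer n i. z \<subseteq> x}. (g - fy_explicit n y i) x) = 0"
      using sum_supersets_eq_0_if_in_V[OF g(2)] fy_explicit_orth_gz[OF assms(1,2)]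
      by (simp add: sum_subtractf)
  qed
  then show ?thesis by simp
qed

lemma fy_eq_fy_explicit:
  assumes "card y \<le> i" "i \<le> r"
  shows "\<exists>!f. is_fy n y i f" and "fy n y i = fy_explicit n y i"
proof -
  show ex1: "\<exists>!f. is_fy n y i f"
    using is_fy_fy_explicit[OF assms] is_fy_unique[OF assms] by blast
  show "fy n y i = fy_explicit n y i"
    unfolding fy_def using ex1 is_fy_fy_explicit[OF assms] by (rule the1_equality[of "is_fy n y i"])
qed

lemma fy_explicit_in_SB:
  assumes "i \<le> r"
  shows "fy_explicit n y i \<in> SB n r y"
  unfolding SB_def
proof (intro CollectI conjI ballI impI)
  show "fy_explicit n y i \<in> funs_on (ball_B n r)"
    using fy_explicit_in_funs_on layer_subset_ball_B[OF assms] unfolding funs_on_def by blast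
  fix x x' assume x: "x \<in> ball_B n r" "x' \<in> ball_B n r" and eq: "card x = card x' \<and> hdist x y = hdist x' y"
  show "fy_explicit n y i x = fy_explicit n y i x'"
  proof (cases "card x = i")
    case True
    then have "x \<in> layer n i" "x' \<in> layer n i" using x eq ball_B_in_layer by metis+
    then show ?thesis using fy_explicit_radial[OF finite_y] eq by blast
  next
    case False
    then show ?thesis using eq by (simp add: fy_explicit_eq_0)
  qed
qed

lemma fy_explicit_in_W:
  assumes "card y \<le> i" "i \<le> r"
  shows "fy_explicit n y i \<in> W n r y"
proof -
  have "fvs.span (\<Union>z\<in>{z\<in>ball_B n r. card z < card y}. SB n r z)
      \<subseteq> {g. ip (ball_B n r) (fy_explicit n y i) g = 0}"
  proof (rule fvs.span_minimal[OF _ subspace_ip_eq_0], rule subsetI)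
    fix g assume "g \<in> (\<Union>z\<in>{z\<in>ball_B n r. card z < card y}. SB n r z)"
    then obtain z where z: "z \<in> cube n" "card z < card y" "g \<in> SB n r z"
      using ball_B_subset_cube by blast
    have "layer_restr n i g \<in> U n i (card z)"
      by (rule SB_layer_restr_in_U[OF z(1,3) assms(2)])
    then have "ip (layer n i) (fy_explicit n y i) (layer_restr n i g) = 0"
      by (rule fy_explicit_orth_U[OF assms z(2)])
    then show "g \<in> {g. ip (ball_B n r) (fy_explicit n y i) g = 0}"
      using ip_ball_B_eq_ip_layer[OF fy_explicit_in_funs_on assms(2)] by simp
  qed
  then show ?thesis
    using fy_explicit_in_SB[OF assms(2)] unfolding W_def orth_def SB_def by blast
qed

lemma W_layer_restr_eq:
  assumes w: "w \<in> W n r y" and i: "card y \<le> i" "i \<le> r" and p: "p \<in> layer n i" "y \<subseteq> p"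
  shows "layer_restr n i w = fscale (w p) (fy_explicit n y i)"
proof -
  let ?h = "layer_restr n i w - fscale (w p) (fy_explicit n y i)"
  have "?h = 0"
  proof (rule radial_orth_eq_0[OF y_in_cube])
    show "?h \<in> funs_on (layer n i)"
      using layer_restr_in_funs_on fy_explicit_in_funs_on unfolding funs_on_def fscale_def by simp
    show "\<forall>x\<in>layer n i. \<forall>x'\<in>layer n i. hdist x y = hdist x' y \<longrightarrow> ?h x = ?h x'"
    proof (intro ballI impI)
      fix x x' assume "x \<in> layer n i" "x' \<in> layer n i" "hdist x y = hdist x' y"
      then have "layer_restr n i w x = layer_restr n i w x'" "fy_explicit n y i x = fy_explicit n y i x'"
        using W_layer_restr_radial[OF w i(2)] fy_explicit_radial[OF finite_y] by blast+
      then show "?h x = ?h x'" by (simp add: fscale_def)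
    qed
    show "\<forall>z\<in>cube n. card z < card y \<longrightarrow> (\<Sum>x\<in>{x\<in>layer n i. z \<subseteq> x}. ?h x) = 0"
      using W_layer_restr_orth[OF w i(2) y_in_ball_B] fy_explicit_orth_gz[OF i]
      by (simp add: fscale_def sum_subtractf sum_distrib_left[symmetric])
    have "w x = w p" if "x \<in> layer n i" "y \<subseteq> x" for x
    proof -
      have "y - x = {}" "y - p = {}" using that(2) p(2) by blast+
      then have "hdist x y = hdist p y"
        using that(1) p(1) finite_y layerD hdist_eq_iff_card_Diff_eq[of x p y] by metis
      then have "layer_restr n i w x = layer_restr n i w p"
        using W_layer_restr_radial[OF w i(2)] that(1) p(1) by blast
      then show ?thesis using that(1) p(1) unfolding layer_restr_def by simp
    qed
    then show "\<forall>x\<in>layer n i. y \<subseteq> x \<longrightarrow> ?h x = 0"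
      using fy_explicit_superset unfolding layer_restr_def fscale_def by simp
  qed
  then show ?thesis by simp
qed

lemma W_subset_span_fy_explicit: "W n r y \<subseteq> fvs.span (fy_explicit n y ` {card y..r})"
proof
  fix w assume w: "w \<in> W n r y"
  have "layer_restr n i w \<in> fvs.span (fy_explicit n y ` {card y..r})" if i: "i \<le> r" for i
  proof (cases "card y \<le> i")
    case True
    obtain p where "p \<in> layer n i" "y \<subseteq> p"
      using obtain_superset_in_layer[OF True i] .
    then have "layer_restr n i w = fscale (w p) (fy_explicit n y i)"
      by (rule W_layer_restr_eq[OF w True i])
    moreover have "fy_explicit n y i \<in> fy_explicit n y ` {card y..r}" using True i by simp
    ultimately show ?thesis by (simp add: fvs.span_base fvs.span_scale)
  next
    case False
    then show ?thesis using W_layer_restr_below[OF w y_in_ball_B] fvs.span_zero by simp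
  qed
  moreover have "w \<in> funs_on (ball_B n r)" using w unfolding W_def SB_def by blast
  ultimately show "w \<in> fvs.span (fy_explicit n y ` {card y..r})"
    using sum_layer_restr by (metis atMost_iff fvs.span_sum)
qed

lemma inj_on_fy_explicit: "inj_on (fy_explicit n y) {card y..r}"
proof (rule inj_onI)
  fix i j assume i: "i \<in> {card y..r}" and "j \<in> {card y..r}" and eq: "fy_explicit n y i = fy_explicit n y j"
  obtain p where "p \<in> layer n i" "y \<subseteq> p"
    using obtain_superset_in_layer i by auto
  then show "i = j" using fun_cong[OF eq, of p] fy_explicit_at_superset by (auto split: if_splits)
qed

lemma independent_fy_explicit: "fvs.independent (fy_explicit n y ` {card y..r})"
  unfolding fvs.independent_explicit_module
proof (intro allI impI)
  fix T u v
  assume T: "finite T" "T \<subseteq> fy_explicit n y ` {card y..r}" and sum: "(\<Sum>v\<in>T. fscale (u v) v) = 0"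
    and v: "v \<in> T"
  obtain i where i: "i \<in> {card y..r}" "v = fy_explicit n y i" using T(2) v by blast
  obtain p where p: "p \<in> layer n i" "y \<subseteq> p"
    using obtain_superset_in_layer i by auto
  have "u v' * v' p = (if v' = v then u v else 0)" if v': "v' \<in> T" for v'
  proof -
    obtain j where "j \<in> {card y..r}" "v' = fy_explicit n y j" using T(2) v' by blast
    then have "v' p = (if v' = v then 1 else 0)"
      using i inj_on_fy_explicit fy_explicit_at_superset[OF p] unfolding inj_on_def by auto
    then show ?thesis by simp
  qed
  then have "(\<Sum>v'\<in>T. fscale (u v') v') p = (\<Sum>v'\<in>T. if v' = v then u v else 0)"
    unfolding sum_apply fscale_def by (rule sum.cong[OF refl])
  also have "\<dots> = u v" using T(1) v by simp
  finally have "(\<Sum>v'\<in>T. fscale (u v') v') p = u v" .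
  then show "u v = 0" using sum by simp
qed

lemma fy_explicit_basis_W:
  "fy_explicit n y ` {card y..r} \<subseteq> W n r y"
  "fvs.span (fy_explicit n y ` {card y..r}) = W n r y"
  "fvs.dim (W n r y) = r - card y + 1"
proof -
  show sub: "fy_explicit n y ` {card y..r} \<subseteq> W n r y"
    using fy_explicit_in_W by auto
  show "fvs.span (fy_explicit n y ` {card y..r}) = W n r y"
    by (rule fvs.span_subspace[OF sub W_subset_span_fy_explicit subspace_W])
  have "card (fy_explicit n y ` {card y..r}) = r - card y + 1"
    using card_image[OF inj_on_fy_explicit] card_y_le_r by simp
  then show "fvs.dim (W n r y) = r - card y + 1"
    by (rule fvs.dim_unique[OF sub W_subset_span_fy_explicit independent_fy_explicit])
qed

end

theorem corollary2p4:
  fixes n r t :: nat and y :: "nat set"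
  assumes "2 * r \<le> n"
    and "y \<in> ball_B n r"
    and "card y = t"
  shows "fvs.dim (W n r y) = r - t + 1
    \<and> (\<forall>i\<in>{t..r}. \<exists>!f. is_fy n y i f)
    \<and> inj_on (fy n y) {t..r}
    \<and> fvs.independent (fy n y ` {t..r})
    \<and> fy n y ` {t..r} \<subseteq> W n r y
    \<and> fvs.span (fy n y ` {t..r}) = W n r y
    \<and> (t < r \<longrightarrow> adj n r (fy n y t) = fscale (gamma n t t) (fy n y (t + 1)))
    \<and> (t < r \<longrightarrow> adj n r (fy n y r) = fscale (beta n r) (fy n y (r - 1)))
    \<and> (\<forall>i. t < i \<and> i < r \<longrightarrow>
           adj n r (fy n y i) = fscale (beta n i) (fy n y (i - 1)) + fscale (gamma n t i) (fy n y (i + 1)))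
    \<and> (t = r \<longrightarrow> adj n r (fy n y t) = 0)"
proof -
  note explicit = fy_eq_fy_explicit[OF assms(1,2), unfolded assms(3)]
  have fy: "fy n y i = fy_explicit n y i" if "t \<le> i" "i \<le> r" for i
    using explicit(2) that by simp
  have adj: "adj n r (fy n y i) = (if t < i then fscale (beta n i) (fy n y (i - 1)) else 0)
      + (if i < r then fscale (gamma n t i) (fy n y (i + 1)) else 0)" if i: "t \<le> i" "i \<le> r" for i
  proof -
    have "t < i \<Longrightarrow> fy n y (i - 1) = fy_explicit n y (i - 1)"
      "i < r \<Longrightarrow> fy n y (i + 1) = fy_explicit n y (i + 1)"
      using i by (auto intro: fy)
    then show ?thesis
      using adj_fy_explicit_apply[OF assms(1,2), unfolded assms(3)] i by (auto simp: fun_eq_iff fscale_def fy)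
  qed
  have "fy n y ` {t..r} = fy_explicit n y ` {t..r}" "inj_on (fy n y) {t..r}"
    using fy inj_on_fy_explicit[OF assms(1,2)] inj_on_cong[of "{t..r}" "fy n y"]
    by (auto simp: assms(3) intro!: image_cong)
  moreover have "t \<le> r" using card_y_le_r[OF assms(1,2)] assms(3) by simp
  ultimately show ?thesis
    using explicit(1) adj independent_fy_explicit[OF assms(1,2)] fy_explicit_basis_W[OF assms(1,2)]
    by (simp add: assms(3))
qed

end
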